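(* Fix stress levels $x_1<x_2$, a stress-change time $\tau>0$, and inspection times $0=t_0<t_1<\cdots<t_L$ with $t_k=\tau$ for some $1\le k<L$. Let $\theta=(\gamma_0,\gamma_1,\gamma_2,a_1)\in\Theta=(0,\infty)^4$, and let $s=s(\theta)=u-\tau$, where $u$ is the unique positive root of $\frac{\gamma_2}{3}u^3+\frac{\gamma_1}{2}u^2+\gamma_0u-e^{a_1(x_1-x_2)}\left(\gamma_0\tau+\gamma_1\frac{\tau^2}{2}+\gamma_2\frac{\tau^3}{3}\right)=0$. Define $$R_\theta(t,x_1)=\exp\!\Big(-e^{a_1x_1}\big(\gamma_0t+\gamma_1\tfrac{t^2}{2}+\gamma_2\tfrac{t^3}{3}\big)\Big),\quad R_\theta(t,x_2)=\exp\!\Big(-e^{a_1x_2}\big(\gamma_0(t+s)+\gamma_1\tfrac{(t+s)^2}{2}+\gamma_2\tfrac{(t+s)^3}{3}\big)\Big),$$ and $R_\theta(t)=R_\theta(t,x_1)$ for $0\le t\le\tau$, $R_\theta(t)=R_\theta(t,x_2)$ for $t\ge\tau$. Let $\pi_j(\theta)=R_\theta(t_{j-1})-R_\theta(t_j)$ for $j=1,\dots,L$, $\pi_{L+1}(\theta)=R_\theta(t_L)$, $\pi(\theta)=(\pi_1(\theta),\dots,\pi_{L+1}(\theta))^T$. Given counts $(n_1,\dots,n_{L+1})$ with $N=\sum_jn_j$, $\widehat p=(n_1/N,\dots,n_{L+1}/N)^T$, and $\beta\ge0$, let $\widehat\theta_\beta$ be a minimizer over $\Theta$ of $d_\beta(\widehat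 p,\pi(\theta))$, where for $\beta>0$ $$d_\beta(\widehat p,\pi(\theta))=\sum_{j=1}^{L+1}\Big[\pi_j(\theta)^{\beta+1}-\big(1+\tfrac1\beta\big)\pi_j(\theta)^\beta\widehat p_j+\tfrac1\beta\widehat p_j^{\beta+1}\Big]$$ and for $\beta=0$, $d_0(\widehat p,\pi(\theta))=\sum_j\widehat p_j\log(\widehat p_j/\pi_j(\theta))$. Then $\widehat\theta_\beta$ satisfies $U_\beta(\widehat\theta_\beta)=0\in\mathbb{R}^4$, where $$U_\beta(\theta)=W(\theta)^TD(\theta)^{\beta-1}\big(\widehat p-\pi(\theta)\big),$$ $D(\theta)=\mathrm{diag}(\pi_1(\theta),\dots,\pi_{L+1}(\theta))$, and $W(\theta)$ is the $(L+1)\times4$ Jacobian matrix of $\pi(\theta)$ whose $j$-th row is $w_j^T$ with $w_j=\frac{\partial R_\theta(t_{j-1},x_1)}{\partial\theta}-\frac{\partial R_\theta(t_j,x_1)}{\partial\theta}$ if $t_{j-1}<\tau$, $w_j=\frac{\partial R_\theta(t_{j-1},x_2)}{\partial\theta}-\frac{\partial R_\theta(t_j,x_2)}{\partial\theta}$ if $\tau\le t_{j-1}$ and $j\le L$, and $w_{L+1}=\frac{\partial R_\theta(t_L,x_2)}{\partial\theta}$. Here, with $k_1(t)=\gamma_2t^2+\gamma_1t+\gamma_0$ and $k_2(t)=\frac{\gamma_2}{3}t^2+\frac{\gamma_1}{2}t+\gamma_0$, $$\frac{\partial R_\theta(t,x_1)}{\partial\gamma_0}=-R_\theta(t,x_1)e^{a_1x_1}t,\quad\frac{\partial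 R_\theta(t,x_1)}{\partial\gamma_1}=-R_\theta(t,x_1)e^{a_1x_1}\frac{t^2}{2},\quad\frac{\partial R_\theta(t,x_1)}{\partial\gamma_2}=-R_\theta(t,x_1)e^{a_1x_1}\frac{t^3}{3},$$ $$\frac{\partial R_\theta(t,x_1)}{\partial a_1}=-R_\theta(t,x_1)e^{a_1x_1}t\,k_2(t)\,x_1,$$ $$\frac{\partial R_\theta(t,x_2)}{\partial\gamma_0}=-R_\theta(t,x_2)e^{a_1x_2}\Big((t+s)+(\tau+s)\frac{k_1(t+s)}{k_1(\tau+s)}\Big(\frac{k_2(\tau+s)}{k_2(\tau)}-1\Big)\Big),$$ $$\frac{\partial R_\theta(t,x_2)}{\partial\gamma_1}=-R_\theta(t,x_2)e^{a_1x_2}\Big(\frac{(t+s)^2}{2}+\frac{\tau+s}{2}\frac{k_1(t+s)}{k_1(\tau+s)}\Big(\tau\frac{k_2(\tau+s)}{k_2(\tau)}-(\tau+s)\Big)\Big),$$ $$\frac{\partial R_\theta(t,x_2)}{\partial\gamma_2}=-R_\theta(t,x_2)e^{a_1x_2}\Big(\frac{(t+s)^3}{3}+\frac{\tau+s}{3}\frac{k_1(t+s)}{k_1(\tau+s)}\Big(\tau^2\frac{k_2(\tau+s)}{k_2(\tau)}-(\tau+s)^2\Big)\Big),$$ $$\frac{\partial R_\theta(t,x_2)}{\partial a_1}=-R_\theta(t,x_2)e^{a_1x_2}\Big[(t+s)k_2(t+s)x_2+\frac{k_1(t+s)}{k_1(\tau+s)}(\tau+s)k_2(\tau+s)(x_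1-x_2)\Big].$$
   Context: Interval-monitored simple step-stress accelerated life test under a proportional hazards model with quadratic baseline hazard $h_0(t)=\gamma_0+\gamma_1t+\gamma_2t^2$ and stress effect $e^{a_1x}$, combined with the cumulative exposure model (the shift $s$ makes the cumulative hazard continuous at $\tau$, with $s<0$ and $\tau+s>0$). $N$ devices are tested; $n_j$ is the number failing in $(t_{j-1},t_j]$ for $j\le L$ and $n_{L+1}$ the number surviving past $t_L$. Stress is $x_1$ on $[0,\tau)$ and $x_2$ afterwards. *)

theory Defs
  imports "HOL-Analysis.Analysis"
begin

text \<open>Parameter vector theta = (gamma0, gamma1, gamma2, a1) as a real^4:
  theta$1 = gamma0, theta$2 = gamma1, theta$3 = gamma2, theta$4 = a1.\<close>

definition Theta :: "(real^4) set" where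
  "Theta = {th. \<forall>i. th $ i > 0}"

definition Hc :: "real^4 \<Rightarrow> real \<Rightarrow> real" where
  "Hc th t = th$1 * t + th$2 * t^2 / 2 + th$3 * t^3 / 3"

definition k1 :: "real^4 \<Rightarrow> real \<Rightarrow> real" where
  "k1 th t = th$3 * t^2 + th$2 * t + th$1"

definition k2 :: "real^4 \<Rightarrow> real \<Rightarrow> real" where
  "k2 th t = th$3 / 3 * t^2 + th$2 / 2 * t + th$1"

definition shift :: "real \<Rightarrow> real \<Rightarrow> real \<Rightarrow> real^4 \<Rightarrow> real" where
  "shift x1 x2 \<tau> th =
     (THE u. u > 0 \<and> th$3 / 3 * u^3 + th$2 / 2 * u^2 + th$1 * u
        - exp (th$4 * (x1 - x2)) * (th$1 * \<tau> + th$2 * \<tau>^2 / 2 + th$3 * \<tau>^3 / 3) = 0) - \<tau>"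

definition R1 :: "real \<Rightarrow> real^4 \<Rightarrow> real \<Rightarrow> real" where
  "R1 x1 th t = exp (- exp (th$4 * x1) * Hc th t)"

definition R2 :: "real \<Rightarrow> real \<Rightarrow> real \<Rightarrow> real^4 \<Rightarrow> real \<Rightarrow> real" where
  "R2 x1 x2 \<tau> th t = exp (- exp (th$4 * x2) * Hc th (t + shift x1 x2 \<tau> th))"

definition Rel :: "real \<Rightarrow> real \<Rightarrow> real \<Rightarrow> real^4 \<Rightarrow> real \<Rightarrow> real" where
  "Rel x1 x2 \<tau> th t = (if t \<le> \<tau> then R1 x1 th t else R2 x1 x2 \<tau> th t)"

definition cellprob :: "real \<Rightarrow> real \<Rightarrow> real \<Rightarrow> (nat \<Rightarrow> real) \<Rightarrow> nat \<Rightarrow> real^4 \<Rightarrow> nat \<Rightarrow> real" where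
  "cellprob x1 x2 \<tau> t L th j =
     (if j \<le> L then Rel x1 x2 \<tau> th (t (j - 1)) - Rel x1 x2 \<tau> th (t j)
      else Rel x1 x2 \<tau> th (t L))"

definition phat :: "(nat \<Rightarrow> nat) \<Rightarrow> nat \<Rightarrow> nat \<Rightarrow> real" where
  "phat n L j = real (n j) / real (\<Sum>i=1..L+1. n i)"

definition dpd :: "real \<Rightarrow> nat \<Rightarrow> (nat \<Rightarrow> real) \<Rightarrow> (nat \<Rightarrow> real) \<Rightarrow> real" where
  "dpd \<beta> L p q =
     (if \<beta> = 0 then (\<Sum>j=1..L+1. p j * ln (p j / q j))
      else (\<Sum>j=1..L+1. q j powr (\<beta> + 1) - (1 + 1 / \<beta>) * q j powr \<beta> * p j
                         + 1 / \<beta> * p j powr (\<beta> + 1)))"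

definition dR1 :: "real \<Rightarrow> real^4 \<Rightarrow> real \<Rightarrow> real^4" where
  "dR1 x1 th t = (let c = - R1 x1 th t * exp (th$4 * x1) in
     (\<chi> i. if i = 1 then c * t
           else if i = 2 then c * (t^2 / 2)
           else if i = 3 then c * (t^3 / 3)
           else c * (t * k2 th t * x1)))"

definition dR2 :: "real \<Rightarrow> real \<Rightarrow> real \<Rightarrow> real^4 \<Rightarrow> real \<Rightarrow> real^4" where
  "dR2 x1 x2 \<tau> th t = (let s = shift x1 x2 \<tau> th;
       c = - R2 x1 x2 \<tau> th t * exp (th$4 * x2);
       q = k1 th (t + s) / k1 th (\<tau> + s);
       r = k2 th (\<tau> + s) / k2 th \<tau> in
     (\<chi> i. if i = 1 then c * ((t + s) + (\<tau> + s) * q * (r - 1))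
           else if i = 2 then c * ((t + s)^2 / 2 + (\<tau> + s) / 2 * q * (\<tau> * r - (\<tau> + s)))
           else if i = 3 then c * ((t + s)^3 / 3 + (\<tau> + s) / 3 * q * (\<tau>^2 * r - (\<tau> + s)^2))
           else c * ((t + s) * k2 th (t + s) * x2 + q * (\<tau> + s) * k2 th (\<tau> + s) * (x1 - x2))))"

definition wrow :: "real \<Rightarrow> real \<Rightarrow> real \<Rightarrow> (nat \<Rightarrow> real) \<Rightarrow> nat \<Rightarrow> real^4 \<Rightarrow> nat \<Rightarrow> real^4" where
  "wrow x1 x2 \<tau> t L th j =
     (if j \<le> L then
        (if t (j - 1) < \<tau> then dR1 x1 th (t (j - 1)) - dR1 x1 th (t j)
         else dR2 x1 x2 \<tau> th (t (j - 1)) - dR2 x1 x2 \<tau> th (t j))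
      else dR2 x1 x2 \<tau> th (t L))"

text \<open>Estimating function U_beta(theta) = W^T D^(beta-1) (phat - pi), written componentwise.\<close>
definition Ubeta :: "real \<Rightarrow> real \<Rightarrow> real \<Rightarrow> (nat \<Rightarrow> real) \<Rightarrow> nat \<Rightarrow> (nat \<Rightarrow> nat) \<Rightarrow> real \<Rightarrow> real^4 \<Rightarrow> real^4" where
  "Ubeta x1 x2 \<tau> t L n \<beta> th =
     (\<chi> i. \<Sum>j=1..L+1. wrow x1 x2 \<tau> t L th j $ i
              * cellprob x1 x2 \<tau> t L th j powr (\<beta> - 1)
              * (phat n L j - cellprob x1 x2 \<tau> t L th j))"

end

theory Submission
  imports Defs
begin

(* Theta is open and thhat minimises theta \<mapsto> d_beta(phat, pi(theta)) on it, so the derivative of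
   this function at thhat along each coordinate axis vanishes.  Differentiating term by term, that
   derivative is -(beta + 1) times the corresponding component of U_beta(thhat), as soon as W(theta)
   is the Jacobian of pi(theta); for beta = 0 one also needs sum_j w_j = 0, which follows from
   sum_j pi_j(theta) = 1.
   The Jacobian is the substantial part.  The shift is defined implicitly by
   H(tau + s) = e^(a1 (x1 - x2)) H(tau), with H the cumulative baseline hazard.  H is strictly
   increasing, so the root depends continuously on theta, and the factorisation
   H(a) - H(b) = S(a, b) (a - b) with S(a, a) = k1(a) > 0 gives its derivative by implicit
   differentiation.  As R is continuous at tau, the derivative at t = tau can be taken from R(t, x2). *)

lemma strict_mono_on_atMostI:
  fixes t :: "nat \<Rightarrow> 'a::order"
  assumes "\<And>j. j < L \<Longrightarrow> t j < t (Suc j)"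
  shows "strict_mono_on {..L} t"
proof (rule strict_mono_onI)
  fix a b
  assume "a \<in> {..L}" "b \<in> {..L}" "a < b"
  have "b \<le> L \<longrightarrow> t a < t b"
    using \<open>a < b\<close>
  proof (induction a b rule: less_Suc_induct)
    case (1 i)
    then show ?case
      using assms by simp
  next
    case (2 i j k)
    then show ?case
      using order.strict_trans by fastforce
  qed
  then show "t a < t b"
    using \<open>b \<in> {..L}\<close> by simp
qed

lemma tendsto_root_of_strict_mono:
  fixes G :: "'a \<Rightarrow> real \<Rightarrow> real" and g :: "real \<Rightarrow> real" and u :: "'a \<Rightarrow> real"
  assumes lim: "\<And>w. ((\<lambda>h. G h w) \<longlongrightarrow> g w) F"
    and mono: "strict_mono_on {0..} g" and root: "0 < u0" "g u0 = 0"
    and roots: "eventually (\<lambda>h. strict_mono_on {0..} (G h) \<and> 0 \<le> u h \<and> G h (u h) = 0) F"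
  shows "(u \<longlongrightarrow> u0) F"
proof (rule tendstoI)
  fix e :: real
  assume "0 < e"
  define e' where "e' = min e u0"
  have e': "0 < e'" "e' \<le> e" "0 \<le> u0 - e'"
    using \<open>0 < e\<close> root by (auto simp: e'_def)
  have "g (u0 - e') < 0" "0 < g (u0 + e')"
    using strict_mono_onD[OF mono, of "u0 - e'" u0] strict_mono_onD[OF mono, of u0 "u0 + e'"] e' root
    by auto
  then have "eventually (\<lambda>h. G h (u0 - e') < 0) F" "eventually (\<lambda>h. 0 < G h (u0 + e')) F"
    using lim order_tendstoD by blast+
  with roots show "eventually (\<lambda>h. dist (u h) u0 < e) F"
  proof eventually_elim
    case (elim h)
    then have "u0 - e' < u h" "u h < u0 + e'"
      using strict_mono_on_leD[of "{0..}" "G h" "u h" "u0 - e'"]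
        strict_mono_on_leD[of "{0..}" "G h" "u0 + e'" "u h"] e'
      by (force simp: not_less)+
    then show ?case
      using e' by (simp add: dist_real_def abs_less_iff)
  qed
qed

lemma DERIV_of_eventually_slope:
  fixes f g :: "real \<Rightarrow> real"
  assumes "eventually (\<lambda>z. f z - f x = g z * (z - x)) (at x)" and "isCont g x"
  shows "(f has_real_derivative g x) (at x)"
  unfolding has_field_derivative_iff
proof (rule Lim_transform_eventually)
  show "(g \<longlongrightarrow> g x) (at x)"
    using assms(2) by (simp add: isCont_def)
  show "eventually (\<lambda>z. g z = (f z - f x) / (z - x)) (at x)"
    using assms(1) eventually_neq_at_within[of x x UNIV] by eventually_elim auto
qed

lemma DERIV_local_min_eventually:
  fixes f :: "real \<Rightarrow> real"
  assumes "(f has_real_derivative l) (at x)" and "eventually (\<lambda>y. f x \<le> f y) (at x)"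
  shows "l = 0"
proof -
  have "(\<lambda>h. l * h) = (\<lambda>h. 0)"
    using assms unfolding has_field_derivative_def by (rule has_derivative_local_min)
  then show ?thesis
    by (metis mult_1_right)
qed

subsection \<open>The parameter space\<close>

lemma Theta_nth_pos: "th \<in> Theta \<Longrightarrow> 0 < th $ i"
  by (simp add: Theta_def)

lemma open_Theta: "open Theta"
proof -
  have "Theta = (\<Inter>i\<in>UNIV. {x. 0 < x $ i})"
    by (auto simp: Theta_def)
  then show ?thesis
    by (metis finite open_INT open_halfspace_component_gt_cart)
qed

lemma eventually_line_in_Theta:
  assumes "th \<in> Theta"
  shows "eventually (\<lambda>h. th + h *\<^sub>R v \<in> Theta) (nhds 0)"
  unfolding eventually_nhds
proof (intro exI conjI)
  show "open ((\<lambda>h. th + h *\<^sub>R v) -` Theta)"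
    by (intro continuous_open_vimage open_Theta continuous_intros)
qed (use assms in auto)

subsection \<open>Cumulative baseline hazard\<close>

lemma Hc_eq_mult_k2: "Hc th w = w * k2 th w"
  by (simp add: Hc_def k2_def power2_eq_square power3_eq_cube algebra_simps)

lemma Hc_add_scaleR: "Hc (th + h *\<^sub>R v) w = Hc th w + h * Hc v w"
  by (simp add: Hc_def ring_distribs add_divide_distrib)

lemma Hc_axis:
  "Hc (axis i 1) w = (if i = 1 then w else if i = 2 then w^2 / 2 else if i = 3 then w^3 / 3 else 0)"
  using exhaust_4[of i] by (auto simp: Hc_def axis_def)

definition Hc_slope :: "real^4 \<Rightarrow> real \<Rightarrow> real \<Rightarrow> real" where
  "Hc_slope th a b = th$1 + th$2 * (a + b) / 2 + th$3 * (a^2 + a * b + b^2) / 3"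

lemma Hc_diff_eq_slope: "Hc th a - Hc th b = Hc_slope th a b * (a - b)"
  by (simp add: Hc_def Hc_slope_def field_simps power2_eq_square power3_eq_cube)

lemma Hc_slope_diag: "Hc_slope th a a = k1 th a"
  by (simp add: Hc_slope_def k1_def field_simps power2_eq_square)

lemma Hc_slope_pos:
  assumes "th \<in> Theta" "0 \<le> a" "0 \<le> b"
  shows "0 < Hc_slope th a b"
proof -
  have "0 \<le> th$2 * (a + b) / 2" "0 \<le> th$3 * (a^2 + a * b + b^2) / 3"
    using assms by (simp_all add: Theta_nth_pos less_imp_le)
  then show ?thesis
    using Theta_nth_pos[OF assms(1), of 1] by (simp add: Hc_slope_def)
qed

lemma Hc_strict_mono:
  assumes "th \<in> Theta" "0 \<le> a" "a < b"
  shows "Hc th a < Hc th b"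
proof -
  have "0 < Hc_slope th b a * (b - a)"
    using Hc_slope_pos[OF assms(1), of b a] assms by simp
  then show ?thesis
    using Hc_diff_eq_slope[of th b a] by simp
qed

lemma Hc_pos: "th \<in> Theta \<Longrightarrow> 0 < w \<Longrightarrow> 0 < Hc th w"
  using Hc_strict_mono[of th 0 w] by (simp add: Hc_def)

lemma k1_pos: "th \<in> Theta \<Longrightarrow> 0 \<le> w \<Longrightarrow> 0 < k1 th w"
  using Hc_slope_pos[of th w w] by (simp add: Hc_slope_diag)

lemma k2_pos: "th \<in> Theta \<Longrightarrow> 0 < w \<Longrightarrow> 0 < k2 th w"
  using Hc_pos[of th w] by (simp add: Hc_eq_mult_k2 zero_less_mult_iff)

lemma DERIV_Hc: "(Hc th has_real_derivative k1 th w) (at w)"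
  unfolding Hc_def k1_def by (rule derivative_eq_intros refl | simp)+

subsection \<open>The time shift\<close>

lemma ex1_pos_root_Hc:
  assumes th: "th \<in> Theta" and C: "0 < C"
  shows "\<exists>!u. 0 < u \<and> Hc th u = C"
proof -
  have "\<exists>u\<ge>0. u \<le> C / th$1 \<and> Hc th u = C"
  proof (rule IVT)
    have "th$1 * (C / th$1) \<le> Hc th (C / th$1)"
      using th C by (simp add: Hc_def Theta_nth_pos less_imp_le)
    then show "C \<le> Hc th (C / th$1)"
      using Theta_nth_pos[OF th, of 1] by simp
    show "\<forall>u. 0 \<le> u \<and> u \<le> C / th$1 \<longrightarrow> isCont (Hc th) u"
      unfolding Hc_def by (auto intro!: continuous_intros)
  qed (use th C in \<open>simp_all add: Hc_def Theta_nth_pos less_imp_le\<close>)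
  then obtain u where "0 \<le> u" "Hc th u = C"
    by blast
  moreover have "u \<noteq> 0"
    using \<open>Hc th u = C\<close> C by (auto simp: Hc_def)
  moreover have "v = u" if "0 < v" "Hc th v = C" for v
    using Hc_strict_mono[OF th, of u v] Hc_strict_mono[OF th, of v u] that \<open>0 \<le> u\<close>
      \<open>Hc th u = C\<close>
    by (cases u v rule: linorder_cases) auto
  ultimately show ?thesis
    by (intro ex1I[of _ u]) auto
qed

lemma shift_root:
  assumes th: "th \<in> Theta" and tau: "0 < \<tau>"
  shows "0 < shift x1 x2 \<tau> th + \<tau>"
    and "Hc th (shift x1 x2 \<tau> th + \<tau>) = exp (th$4 * (x1 - x2)) * Hc th \<tau>"
proof -
  define C where "C = exp (th$4 * (x1 - x2)) * Hc th \<tau>"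
  have "shift x1 x2 \<tau> th = (THE u. 0 < u \<and> Hc th u = C) - \<tau>"
    unfolding shift_def C_def Hc_def by (simp add: algebra_simps)
  moreover have "0 < C"
    using Hc_pos[OF th tau] by (simp add: C_def)
  ultimately show "0 < shift x1 x2 \<tau> th + \<tau>" "Hc th (shift x1 x2 \<tau> th + \<tau>) = C"
    using theI'[OF ex1_pos_root_Hc[OF th]] by simp_all
qed

lemma isCont_shift_along:
  assumes th: "th \<in> Theta" and tau: "0 < \<tau>"
  shows "isCont (\<lambda>h. shift x1 x2 \<tau> (th + h *\<^sub>R v)) 0"
proof -
  define G where "G h w = Hc (th + h *\<^sub>R v) w
    - exp ((th + h *\<^sub>R v)$4 * (x1 - x2)) * Hc (th + h *\<^sub>R v) \<tau>" for h w
  have mono: "strict_mono_on {0..} (G h)" if "th + h *\<^sub>R v \<in> Theta" for h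
    using Hc_strict_mono[OF that] by (intro strict_mono_onI) (simp add: G_def)
  have "((\<lambda>h. shift x1 x2 \<tau> (th + h *\<^sub>R v) + \<tau>) \<longlongrightarrow> shift x1 x2 \<tau> th + \<tau>) (at 0)"
  proof (rule tendsto_root_of_strict_mono)
    show "((\<lambda>h. G h w) \<longlongrightarrow> G 0 w) (at 0)" for w
      unfolding G_def Hc_add_scaleR by (auto intro!: tendsto_eq_intros)
    show "strict_mono_on {0..} (G 0)"
      using mono th by simp
    show "0 < shift x1 x2 \<tau> th + \<tau>" "G 0 (shift x1 x2 \<tau> th + \<tau>) = 0"
      using shift_root[OF th tau] by (simp_all add: G_def)
    show "eventually (\<lambda>h. strict_mono_on {0..} (G h) \<and> 0 \<le> shift x1 x2 \<tau> (th + h *\<^sub>R v) + \<tau>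
        \<and> G h (shift x1 x2 \<tau> (th + h *\<^sub>R v) + \<tau>) = 0) (at 0)"
      using eventually_line_in_Theta[OF th, of v] unfolding eventually_nhds_conv_at
    proof (elim conjE eventually_mono)
      fix h
      assume "th + h *\<^sub>R v \<in> Theta"
      then show "strict_mono_on {0..} (G h) \<and> 0 \<le> shift x1 x2 \<tau> (th + h *\<^sub>R v) + \<tau>
        \<and> G h (shift x1 x2 \<tau> (th + h *\<^sub>R v) + \<tau>) = 0"
        using mono shift_root[OF _ tau] by (simp add: G_def less_imp_le)
    qed
  qed
  then show ?thesis
    unfolding isCont_def by (auto dest: tendsto_add[OF _ tendsto_const[of "- \<tau>"]])
qed

(* Implicit differentiation of H(s + tau) = e^(a1 (x1 - x2)) H(tau) along theta + h v. *)
definition shift_deriv :: "real \<Rightarrow> real \<Rightarrow> real \<Rightarrow> real^4 \<Rightarrow> real^4 \<Rightarrow> real" where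
  "shift_deriv x1 x2 \<tau> th v = (let u = shift x1 x2 \<tau> th + \<tau> in
     (exp (th$4 * (x1 - x2)) * (v$4 * (x1 - x2) * Hc th \<tau> + Hc v \<tau>) - Hc v u) / k1 th u)"

lemma DERIV_shift_along:
  assumes th: "th \<in> Theta" and tau: "0 < \<tau>"
  shows "((\<lambda>h. shift x1 x2 \<tau> (th + h *\<^sub>R v)) has_real_derivative shift_deriv x1 x2 \<tau> th v) (at 0)"
proof -
  define u where "u h = shift x1 x2 \<tau> (th + h *\<^sub>R v) + \<tau>" for h
  define E where "E h = exp ((th$4 + h * v$4) * (x1 - x2)) * (Hc th \<tau> + h * Hc v \<tau>)" for h
  have "(E has_real_derivative exp (th$4 * (x1 - x2)) * (v$4 * (x1 - x2) * Hc th \<tau> + Hc v \<tau>)) (at 0)"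
    unfolding E_def by (rule derivative_eq_intros refl | simp)+ (simp add: algebra_simps)
  then obtain gE where gE: "\<And>h. E h - E 0 = gE h * (h - 0)" "isCont gE 0"
    and gE0: "gE 0 = exp (th$4 * (x1 - x2)) * (v$4 * (x1 - x2) * Hc th \<tau> + Hc v \<tau>)"
    unfolding CARAT_DERIV by blast
  have root: "0 < u h \<and> Hc th (u h) + h * Hc v (u h) = E h" if "th + h *\<^sub>R v \<in> Theta" for h
    using shift_root[OF that tau] by (simp add: u_def E_def Hc_add_scaleR algebra_simps)
  have u0: "0 < u 0" "Hc th (u 0) = E 0"
    using root[of 0] th by simp_all
  define g where "g h = (gE h - Hc v (u h)) / Hc_slope th (u h) (u 0)" for h
  have "isCont u 0"
    unfolding u_def by (intro continuous_intros isCont_shift_along th tau)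
  then have "isCont g 0"
    using gE(2) Hc_slope_pos[OF th, of "u 0" "u 0"] u0
    unfolding g_def Hc_def Hc_slope_def by (auto intro!: continuous_intros)
  moreover have "eventually (\<lambda>h. u h - u 0 = g h * (h - 0)) (at 0)"
    using eventually_line_in_Theta[OF th, of v] unfolding eventually_nhds_conv_at
  proof (elim conjE eventually_mono)
    fix h
    assume "th + h *\<^sub>R v \<in> Theta"
    then have "0 < u h" "Hc_slope th (u h) (u 0) * (u h - u 0) = h * (gE h - Hc v (u h))"
      using root[of h] Hc_diff_eq_slope[of th "u h" "u 0"] gE(1)[of h] u0
      by (simp_all add: algebra_simps)
    then show "u h - u 0 = g h * (h - 0)"
      using Hc_slope_pos[OF th, of "u h" "u 0"] u0 by (simp add: g_def field_simps)
  qed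
  ultimately have "(u has_real_derivative g 0) (at 0)"
    by (rule DERIV_of_eventually_slope[rotated])
  then have "((\<lambda>h. u h - \<tau>) has_real_derivative g 0) (at 0)"
    by (rule derivative_eq_intros) simp_all
  then show ?thesis
    by (simp add: u_def g_def gE0 E_def shift_deriv_def Let_def Hc_slope_diag)
qed

subsection \<open>Survival function\<close>

lemma R1_tau_eq_R2:
  assumes "th \<in> Theta" "0 < \<tau>"
  shows "R1 x1 th \<tau> = R2 x1 x2 \<tau> th \<tau>"
proof -
  have "exp (th$4 * x2) * Hc th (\<tau> + shift x1 x2 \<tau> th)
      = exp (th$4 * x2) * exp (th$4 * (x1 - x2)) * Hc th \<tau>"
    using shift_root(2)[OF assms, of x1 x2] by (simp add: add.commute)
  also have "\<dots> = exp (th$4 * x1) * Hc th \<tau>"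
    by (simp flip: exp_add add: algebra_simps)
  finally show ?thesis
    by (simp add: R1_def R2_def)
qed

lemma DERIV_R1_along:
  "((\<lambda>h. R1 x1 (th + h *\<^sub>R v) t) has_real_derivative
     - R1 x1 th t * exp (th$4 * x1) * (x1 * v$4 * Hc th t + Hc v t)) (at 0)"
  unfolding R1_def Hc_add_scaleR
  by (rule derivative_eq_intros refl | simp)+ (simp add: algebra_simps)

lemma DERIV_R2_along:
  fixes x1 x2 \<tau> t :: real and th v :: "real^4"
  assumes th: "th \<in> Theta" and tau: "0 < \<tau>"
  defines "s \<equiv> shift x1 x2 \<tau> th"
  shows "((\<lambda>h. R2 x1 x2 \<tau> (th + h *\<^sub>R v) t) has_real_derivative
     - R2 x1 x2 \<tau> th t * exp (th$4 * x2)
       * (x2 * v$4 * Hc th (t + s) + Hc v (t + s) + k1 th (t + s) * shift_deriv x1 x2 \<tau> th v)) (at 0)"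
proof -
  define sh where "sh h = shift x1 x2 \<tau> (th + h *\<^sub>R v)" for h
  have sh: "(sh has_real_derivative shift_deriv x1 x2 \<tau> th v) (at 0)" "sh 0 = s"
    unfolding sh_def s_def by (simp_all add: DERIV_shift_along[OF th tau])
  have "((\<lambda>h. t + sh h) has_real_derivative shift_deriv x1 x2 \<tau> th v) (at 0)"
    using sh(1) by (auto intro!: derivative_eq_intros)
  from DERIV_chain2[OF DERIV_Hc this]
  have Hc_sh: "((\<lambda>h. Hc w (t + sh h)) has_real_derivative k1 w (t + s) * shift_deriv x1 x2 \<tau> th v)
      (at 0)" for w
    by (simp add: sh(2))
  show ?thesis
    unfolding R2_def Hc_add_scaleR sh_def[symmetric]
    by (rule Hc_sh derivative_eq_intros refl | simp)+ (simp add: sh s_def algebra_simps)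
qed

lemma dR1_nth:
  "dR1 x1 th t $ i = - R1 x1 th t * exp (th$4 * x1) * (x1 * axis i 1 $ 4 * Hc th t + Hc (axis i 1) t)"
  unfolding Hc_axis using exhaust_4[of i]
  by (auto simp: dR1_def Let_def Hc_eq_mult_k2[of th t] axis_def)

lemma dR2_nth:
  fixes x1 x2 \<tau> t :: real and th :: "real^4"
  assumes th: "th \<in> Theta" and tau: "0 < \<tau>"
  defines "s \<equiv> shift x1 x2 \<tau> th"
  shows "dR2 x1 x2 \<tau> th t $ i = - R2 x1 x2 \<tau> th t * exp (th$4 * x2)
    * (x2 * axis i 1 $ 4 * Hc th (t + s) + Hc (axis i 1) (t + s)
       + k1 th (t + s) * shift_deriv x1 x2 \<tau> th (axis i 1))"
proof -
  define u where "u = \<tau> + s"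
  have u: "0 < u" "Hc th u = exp (th$4 * (x1 - x2)) * Hc th \<tau>"
    using shift_root[OF th tau, of x1 x2] by (simp_all add: u_def s_def add.commute)
  have pos: "0 < k1 th u" "0 < k2 th u" "0 < k2 th \<tau>"
    using k1_pos[OF th] k2_pos[OF th] u tau by simp_all
  \<comment> \<open>The paper's formulas eliminate e^(a1 (x1 - x2)) by the defining equation of s.\<close>
  have ratio: "exp (th$4 * (x1 - x2)) = u * k2 th u / (\<tau> * k2 th \<tau>)"
    using u(2) tau pos by (simp add: Hc_eq_mult_k2 field_simps)
  have shift_deriv: "shift_deriv x1 x2 \<tau> th (axis i 1)
    = (exp (th$4 * (x1 - x2)) * (axis i 1 $ 4 * (x1 - x2) * Hc th \<tau> + Hc (axis i 1) \<tau>)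
       - Hc (axis i 1) u) / k1 th u"
    by (simp add: shift_deriv_def Let_def u_def s_def add.commute)
  have "s + \<tau> = u" "\<tau> + s = u"
    by (simp_all add: u_def)
  note simps = this dR2_def Let_def ratio Hc_eq_mult_k2[of th] axis_def s_def[symmetric]
  consider "i = 1" | "i = 2" | "i = 3" | "i = 4"
    using exhaust_4[of i] by blast
  then show ?thesis
  proof cases
    case 1
    then show ?thesis
      using pos tau unfolding shift_deriv Hc_axis by (simp add: simps) (simp add: field_simps)
  next
    case 2
    then show ?thesis
      using pos tau unfolding shift_deriv Hc_axis by (simp add: simps)
        (simp add: field_simps, simp add: algebra_simps power2_eq_square)
  next
    case 3
    then show ?thesis
      using pos tau unfolding shift_deriv Hc_axis by (simp add: simps)
        (simp add: field_simps, simp add: algebra_simps power2_eq_square power3_eq_cube)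
  next
    case 4
    then show ?thesis
      using pos tau unfolding shift_deriv Hc_axis by (simp add: simps)
  qed
qed

lemma Rel_eq_R2:
  assumes "th \<in> Theta" "0 < \<tau>" "\<tau> \<le> t0"
  shows "Rel x1 x2 \<tau> th t0 = R2 x1 x2 \<tau> th t0"
  using R1_tau_eq_R2[OF assms(1,2)] assms(3) by (auto simp: Rel_def)

lemma DERIV_Rel_axis_before:
  assumes "t0 \<le> \<tau>"
  shows "((\<lambda>h. Rel x1 x2 \<tau> (th + h *\<^sub>R axis i 1) t0) has_real_derivative dR1 x1 th t0 $ i) (at 0)"
  using DERIV_R1_along[where v = "axis i 1"] assms by (simp add: Rel_def dR1_nth)

lemma DERIV_Rel_axis_after:
  assumes th: "th \<in> Theta" and tau: "0 < \<tau>" and "\<tau> \<le> t0"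
  shows "((\<lambda>h. Rel x1 x2 \<tau> (th + h *\<^sub>R axis i 1) t0) has_real_derivative dR2 x1 x2 \<tau> th t0 $ i)
    (at 0)"
proof -
  have "eventually (\<lambda>h. Rel x1 x2 \<tau> (th + h *\<^sub>R axis i 1) t0 = R2 x1 x2 \<tau> (th + h *\<^sub>R axis i 1) t0)
      (nhds 0)"
    using eventually_line_in_Theta[OF th] by (rule eventually_mono)
      (use Rel_eq_R2 tau \<open>\<tau> \<le> t0\<close> in blast)
  then show ?thesis
    using DERIV_R2_along[OF th tau, where v = "axis i 1"] by (simp add: DERIV_cong_ev dR2_nth[OF th tau])
qed

lemma Rel_strict_antimono:
  assumes th: "th \<in> Theta" and tau: "0 < \<tau>" and "0 \<le> a" "a < b"
  shows "Rel x1 x2 \<tau> th b < Rel x1 x2 \<tau> th a"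
proof -
  have R1: "R1 x1 th b' < R1 x1 th a'" if "0 \<le> a'" "a' < b'" for a' b'
    using Hc_strict_mono[OF th that] by (simp add: R1_def)
  have R2: "R2 x1 x2 \<tau> th b' < R2 x1 x2 \<tau> th a'" if "\<tau> \<le> a'" "a' < b'" for a' b'
    using Hc_strict_mono[OF th, of "a' + shift x1 x2 \<tau> th" "b' + shift x1 x2 \<tau> th"]
      shift_root(1)[OF th tau, of x1 x2] that by (simp add: R2_def)
  consider "b \<le> \<tau>" | "a < \<tau>" "\<tau> < b" | "\<tau> \<le> a"
    by linarith
  then show ?thesis
  proof cases
    case 1
    then show ?thesis
      using R1 assms by (simp add: Rel_def)
  next
    case 2
    then show ?thesis
      using R1[of a \<tau>] R2[of \<tau> b] R1_tau_eq_R2[OF th tau, of x1 x2] assms by (simp add: Rel_def)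
  next
    case 3
    then show ?thesis
      using R2[of a b] Rel_eq_R2[OF th tau] assms by simp
  qed
qed

subsection \<open>Cell probabilities\<close>

lemma sum_cellprob:
  assumes "t 0 = 0" "0 < \<tau>"
  shows "(\<Sum>j=1..L+1. cellprob x1 x2 \<tau> t L th j) = 1"
proof -
  have "(\<Sum>j=1..L. cellprob x1 x2 \<tau> t L th j)
      = (\<Sum>j=1..L. Rel x1 x2 \<tau> th (t (j - 1)) - Rel x1 x2 \<tau> th (t j))"
    by (simp add: cellprob_def)
  also have "\<dots> = Rel x1 x2 \<tau> th (t 0) - Rel x1 x2 \<tau> th (t L)"
    by (induction L) (simp_all add: sum.atLeast_Suc_atMost_Suc_shift)
  finally show ?thesis
    using assms by (simp add: cellprob_def Rel_def R1_def Hc_def)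
qed

lemma cellprob_pos:
  assumes "th \<in> Theta" "0 < \<tau>" "0 \<le> t 0" "strict_mono_on {..L} t" "j \<in> {1..L+1}"
  shows "0 < cellprob x1 x2 \<tau> t L th j"
proof (cases "j \<le> L")
  case True
  have "t 0 \<le> t (j - 1)" "t (j - 1) < t j"
    using strict_mono_on_leD[OF assms(4), of 0 "j - 1"] strict_mono_onD[OF assms(4), of "j - 1" j]
      True assms(5) by auto
  then have "0 \<le> t (j - 1)" "t (j - 1) < t j"
    using assms(3) by simp_all
  then show ?thesis
    using Rel_strict_antimono[OF assms(1,2)] True by (simp add: cellprob_def)
qed (simp add: cellprob_def Rel_def R1_def R2_def)

lemma DERIV_cellprob_axis:
  assumes th: "th \<in> Theta" and tau: "0 < \<tau>" and t: "strict_mono_on {..L} t"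
    and k: "k \<le> L" "t k = \<tau>" and j: "j \<in> {1..L+1}"
  shows "((\<lambda>h. cellprob x1 x2 \<tau> t L (th + h *\<^sub>R axis i 1) j) has_real_derivative
      wrow x1 x2 \<tau> t L th j $ i) (at 0)"
proof (cases "j \<le> L")
  case True
  have "t (j - 1) < t j"
    using strict_mono_onD[OF t, of "j - 1" j] True j by auto
  moreover have "t j \<le> \<tau>" if "t (j - 1) < \<tau>"
  proof -
    have "\<not> k \<le> j - 1"
      using strict_mono_on_leD[OF t, of k "j - 1"] that True k by force
    then show ?thesis
      using strict_mono_on_leD[OF t, of j k] k by simp
  qed
  ultimately show ?thesis
    using True DERIV_Rel_axis_before DERIV_Rel_axis_after[OF th tau]
    by (auto simp: cellprob_def wrow_def intro!: DERIV_diff)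
next
  case False
  then have "\<tau> \<le> t L"
    using strict_mono_on_leD[OF t, of k L] k by simp
  then show ?thesis
    using False DERIV_Rel_axis_after[OF th tau] by (simp add: cellprob_def wrow_def)
qed

lemma sum_wrow_nth_eq_0:
  assumes "th \<in> Theta" "0 < \<tau>" "t 0 = 0" "strict_mono_on {..L} t" "k \<le> L" "t k = \<tau>"
  shows "(\<Sum>j=1..L+1. wrow x1 x2 \<tau> t L th j $ i) = 0"
proof -
  have "((\<lambda>h. \<Sum>j=1..L+1. cellprob x1 x2 \<tau> t L (th + h *\<^sub>R axis i 1) j) has_real_derivative
      (\<Sum>j=1..L+1. wrow x1 x2 \<tau> t L th j $ i)) (at 0)"
    using DERIV_cellprob_axis[OF assms(1,2,4-6)] by (rule DERIV_sum)
  then show ?thesis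
    unfolding sum_cellprob[where t = t, OF assms(3,2)] by (rule DERIV_unique[OF _ DERIV_const])
qed

subsection \<open>Density power divergence\<close>

lemma DERIV_dpd_along:
  fixes q :: "nat \<Rightarrow> real \<Rightarrow> real"
  assumes beta: "0 \<le> \<beta>"
    and q: "\<And>j. j \<in> {1..L+1} \<Longrightarrow> (q j has_real_derivative w j) (at 0)"
    and q_pos: "\<And>j. j \<in> {1..L+1} \<Longrightarrow> 0 < q j 0"
    and p: "\<And>j. j \<in> {1..L+1} \<Longrightarrow> 0 \<le> p j"
    and sum_w: "(\<Sum>j=1..L+1. w j) = 0"
  shows "((\<lambda>h. dpd \<beta> L p (\<lambda>j. q j h)) has_real_derivative
      - (\<beta> + 1) * (\<Sum>j=1..L+1. w j * q j 0 powr (\<beta> - 1) * (p j - q j 0))) (at 0)"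
proof (cases "\<beta> = 0")
  case True
  have "((\<lambda>h. p j * ln (p j / q j h)) has_real_derivative
      - (w j * q j 0 powr (\<beta> - 1) * (p j - q j 0)) - w j) (at 0)" if j: "j \<in> {1..L+1}" for j
  proof (cases "p j = 0")
    case False
    then have "0 < p j"
      using p[OF j] by simp
    with q[OF j] q_pos[OF j] show ?thesis
      by (auto intro!: derivative_eq_intros simp: True powr_neg_one field_simps)
  qed (use q_pos[OF j] in \<open>simp add: True powr_neg_one\<close>)
  then have "((\<lambda>h. \<Sum>j=1..L+1. p j * ln (p j / q j h)) has_real_derivative
      (\<Sum>j=1..L+1. - (w j * q j 0 powr (\<beta> - 1) * (p j - q j 0)) - w j)) (at 0)"
    by (rule DERIV_sum)
  moreover have "(\<Sum>j=1..L+1. - (w j * q j 0 powr (\<beta> - 1) * (p j - q j 0)) - w j)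
      = - (\<beta> + 1) * (\<Sum>j=1..L+1. w j * q j 0 powr (\<beta> - 1) * (p j - q j 0))"
    using sum_w True by (simp add: sum_subtractf sum_negf)
  moreover have "(\<lambda>h. dpd \<beta> L p (\<lambda>j. q j h)) = (\<lambda>h. \<Sum>j=1..L+1. p j * ln (p j / q j h))"
    by (simp add: dpd_def True)
  ultimately show ?thesis
    by (simp only:)
next
  case False
  have "((\<lambda>h. q j h powr (\<beta> + 1) - (1 + 1 / \<beta>) * q j h powr \<beta> * p j + 1 / \<beta> * p j powr (\<beta> + 1))
      has_real_derivative - (\<beta> + 1) * (w j * q j 0 powr (\<beta> - 1) * (p j - q j 0))) (at 0)"
    if j: "j \<in> {1..L+1}" for j
  proof -
    have "q j 0 powr \<beta> = q j 0 powr (\<beta> - 1) * q j 0"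
      using powr_add[of "q j 0" "\<beta> - 1" 1] q_pos[OF j] by simp
    with q_pos[OF j] False show ?thesis
      by (auto intro!: derivative_eq_intros q[OF j] simp: field_simps)
  qed
  then have "((\<lambda>h. \<Sum>j=1..L+1. q j h powr (\<beta> + 1) - (1 + 1 / \<beta>) * q j h powr \<beta> * p j
        + 1 / \<beta> * p j powr (\<beta> + 1))
      has_real_derivative (\<Sum>j=1..L+1. - (\<beta> + 1) * (w j * q j 0 powr (\<beta> - 1) * (p j - q j 0)))) (at 0)"
    by (rule DERIV_sum)
  moreover have "(\<lambda>h. dpd \<beta> L p (\<lambda>j. q j h)) = (\<lambda>h. \<Sum>j=1..L+1. q j h powr (\<beta> + 1)
      - (1 + 1 / \<beta>) * q j h powr \<beta> * p j + 1 / \<beta> * p j powr (\<beta> + 1))"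
    by (simp add: dpd_def False)
  ultimately show ?thesis
    by (simp only: sum_distrib_left)
qed

theorem theorem2:
  fixes x1 x2 \<tau> \<beta> :: real and t :: "nat \<Rightarrow> real" and L k :: nat
    and n :: "nat \<Rightarrow> nat" and thhat :: "real^4"
  assumes "x1 < x2" and "\<tau> > 0"
    and "t 0 = 0" and "\<And>j. j < L \<Longrightarrow> t j < t (Suc j)"
    and "1 \<le> k" and "k < L" and "t k = \<tau>"
    and "(\<Sum>j=1..L+1. n j) > 0"
    and "\<beta> \<ge> 0"
    and "thhat \<in> Theta"
    and "\<forall>th\<in>Theta. dpd \<beta> L (phat n L) (cellprob x1 x2 \<tau> t L thhat)
                     \<le> dpd \<beta> L (phat n L) (cellprob x1 x2 \<tau> t L th)"
  shows "Ubeta x1 x2 \<tau> t L n \<beta> thhat = 0"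
proof (rule vec_eq_iff[THEN iffD2], rule allI)
  fix i :: 4
  define q where "q j h = cellprob x1 x2 \<tau> t L (thhat + h *\<^sub>R axis i 1) j" for j h
  define w where "w j = wrow x1 x2 \<tau> t L thhat j $ i" for j
  have t: "strict_mono_on {..L} t"
    using assms(4) by (rule strict_mono_on_atMostI)
  have q: "(q j has_real_derivative w j) (at 0)" if "j \<in> {1..L+1}" for j
    unfolding q_def w_def using DERIV_cellprob_axis[OF assms(10,2) t _ assms(7) that] assms(6) by simp
  have q_pos: "0 < q j 0" if "j \<in> {1..L+1}" for j
    unfolding q_def using cellprob_pos[OF assms(10,2) _ t that] assms(3) by simp
  have sum_w: "(\<Sum>j=1..L+1. w j) = 0"
    unfolding w_def using sum_wrow_nth_eq_0[OF assms(10,2,3) t _ assms(7)] assms(6) by simp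
  have p: "0 \<le> phat n L j" for j
    unfolding phat_def by (intro divide_nonneg_nonneg of_nat_0_le_iff)
  have Ubeta_nth: "Ubeta x1 x2 \<tau> t L n \<beta> thhat $ i
      = (\<Sum>j=1..L+1. w j * q j 0 powr (\<beta> - 1) * (phat n L j - q j 0))"
    by (simp add: Ubeta_def q_def w_def)
  have "((\<lambda>h. dpd \<beta> L (phat n L) (\<lambda>j. q j h)) has_real_derivative
      - (\<beta> + 1) * Ubeta x1 x2 \<tau> t L n \<beta> thhat $ i) (at 0)"
    unfolding Ubeta_nth using assms(9) q q_pos p sum_w by (rule DERIV_dpd_along)
  moreover have "eventually (\<lambda>h. dpd \<beta> L (phat n L) (\<lambda>j. q j 0) \<le> dpd \<beta> L (phat n L) (\<lambda>j. q j h))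
      (at 0)"
    using eventually_line_in_Theta[OF assms(10), of "axis i 1"] unfolding eventually_nhds_conv_at
    by (auto elim!: eventually_mono simp: q_def assms(11))
  ultimately have "- (\<beta> + 1) * Ubeta x1 x2 \<tau> t L n \<beta> thhat $ i = 0"
    by (rule DERIV_local_min_eventually)
  then show "Ubeta x1 x2 \<tau> t L n \<beta> thhat $ i = 0 $ i"
    using assms(9) by simp
qed

end
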